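(* Consider one round $t+1$ of the $(6,3)$-majority algorithm, with a fixed set of defined nodes at the end of round $t$ and a fixed set of blocked nodes in round $t+1$. Compare two assignments of values in $\{0,1\}$ to these defined nodes, with signed imbalances $\Delta_t$ and $\Delta'_t$ satisfying $\Delta_t\ge\Delta'_t\ge 0$. Then the resulting imbalance after round $t+1$ in the first case stochastically dominates that in the second case: $\Delta_{t+1}\succeq\Delta'_{t+1}$.
   Context: $(k,\ell)$-majority algorithm on $n$ fully interconnected nodes in synchronous rounds: each node $u$ has $x_u\in\{0,1,\bot\}$, and $u$ is defined iff $x_u\neq\bot$. In each round: if $u$ received fewer than $\ell$ values from the previous round or is blocked, it sets $x_u:=\bot$ and skips the rest of the round; otherwise it picks $\ell$ of the received values uniformly at random, sets $x_u$ to their majority, and sends $x_u$ to $k$ nodes chosen independently and uniformly at random. Blocked nodes neither send nor receive messages in that round. Notation: $X_t,Y_t$ are the numbers of nodes with value $0$, resp. $1$, at the end of round $t$, and the signed imbalance is $\Delta_t=(Y_t-X_t)/2$. A random variable $Z$ stochastically dominates $Z'$, written $Z\succeq Z'$, if $\Pr[Z\ge x]\ge\Pr[Z'\ge x]$ for all $x$. *)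

theory Defs
  imports "HOL-Probability.Probability"
begin

text \<open>Nodes are 0,...,n-1. Value 1 is True, value 0 is False; an undefined node
  (value bottom) is None. A message is identified by a pair (u, j): the j-th copy
  (j < k) of the value of the defined node u, sent in round t.\<close>

definition messages :: "nat \<Rightarrow> nat set \<Rightarrow> (nat \<times> nat) set" where
  "messages k D = D \<times> {..<k}"

definition majority_of :: "nat \<Rightarrow> (nat \<Rightarrow> bool) \<Rightarrow> (nat \<times> nat) set \<Rightarrow> bool" where
  "majority_of l x S = (l < 2 * card {m \<in> S. x (fst m)})"

text \<open>Distribution of the node values at the end of round t+1 of the (k,l)-majority
  algorithm, given the set D of defined nodes at the end of round t with their values
  x (only x on D matters), and the set B of nodes blocked in round t+1.
  Each defined node sends its value to k nodes chosen independently and uniformly at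
  random; a node v that is blocked or receives fewer than l values becomes undefined;
  otherwise it picks l of its received values uniformly at random and takes their
  majority.\<close>
definition round_pmf ::
  "nat \<Rightarrow> nat \<Rightarrow> nat \<Rightarrow> nat set \<Rightarrow> nat set \<Rightarrow> (nat \<Rightarrow> bool) \<Rightarrow> (nat \<Rightarrow> bool option) pmf" where
  "round_pmf k l n D B x =
     do {
       dest \<leftarrow> Pi_pmf (messages k D) 0 (\<lambda>_. pmf_of_set {..<n});
       Pi_pmf {..<n} None (\<lambda>v.
         (let R = {m \<in> messages k D. dest m = v} in
          if v \<in> B \<or> card R < l then return_pmf None
          else map_pmf (\<lambda>S. Some (majority_of l x S))
                 (pmf_of_set {S. S \<subseteq> R \<and> card S = l})))
     }"

definition imbalance :: "nat \<Rightarrow> (nat \<Rightarrow> bool option) \<Rightarrow> real" where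
  "imbalance n y = (real (card {v \<in> {..<n}. y v = Some True})
                    - real (card {v \<in> {..<n}. y v = Some False})) / 2"

definition imbalance0 :: "nat set \<Rightarrow> (nat \<Rightarrow> bool) \<Rightarrow> real" where
  "imbalance0 D x = (real (card {u \<in> D. x u}) - real (card {u \<in> D. \<not> x u})) / 2"

definition stoch_dom :: "real pmf \<Rightarrow> real pmf \<Rightarrow> bool" where
  "stoch_dom p q = (\<forall>c. measure_pmf.prob q {z. c \<le> z} \<le> measure_pmf.prob p {z. c \<le> z})"

end

(* A round factors through the randomness that does not depend on the values: the destinations
   of the messages and the set of messages every node samples. For fixed such choices the
   outcome is monotone in the values, so y \<le> x on D couples the two rounds with a smaller
   imbalance for y. The choices are exchangeable under permutations of the senders in D, so the
   round with values x' is distributed like the round with values x' \<circ> \<sigma>; since x has at least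
   as many 1-nodes as x', a permutation \<sigma> of D can map some 1-nodes of x onto all 1-nodes of
   x'; then x' \<circ> \<sigma> \<le> x on D. *)

theory Submission
  imports Defs "HOL-Combinatorics.Permutations"
begin

lemma image_subsets_of_card:
  assumes "inj_on f A"
  shows "image f ` {S. S \<subseteq> A \<and> card S = k} = {S. S \<subseteq> f ` A \<and> card S = k}"
proof -
  have "card (f ` S) = card S" if "S \<subseteq> A" for S
    using card_image inj_on_subset assms that by blast
  then show ?thesis by (auto elim!: subset_imageE)
qed

definition sample_pmf :: "nat \<Rightarrow> 'm set \<Rightarrow> 'm set option pmf" where
  "sample_pmf l R = (if card R < l then return_pmf None
                     else map_pmf Some (pmf_of_set {S. S \<subseteq> R \<and> card S = l}))"

lemma subsets_of_card_nonempty: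
  assumes "finite R" "l \<le> card R"
  shows "{S. S \<subseteq> R \<and> card S = l} \<noteq> {}"
  using obtain_subset_with_card_n[OF assms(2)] by blast

lemma set_sample_pmf:
  assumes "finite R"
  shows "set_pmf (sample_pmf l R) \<subseteq> insert None (Some ` Pow R)"
  using assms subsets_of_card_nonempty[OF assms]
  by (auto simp: sample_pmf_def set_pmf_of_set finite_Collect_subsets)

lemma map_sample_pmf_image:
  assumes "inj_on f R" "finite R"
  shows "map_pmf (map_option (image f)) (sample_pmf l R) = sample_pmf l (f ` R)"
proof (cases "card R < l")
  case True
  then show ?thesis using assms by (simp add: sample_pmf_def card_image)
next
  case False
  have "inj_on (image f) {S. S \<subseteq> R \<and> card S = l}"
    using inj_on_image_Pow[OF assms(1)] by (rule inj_on_subset) auto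
  then have "map_pmf (image f) (pmf_of_set {S. S \<subseteq> R \<and> card S = l})
      = pmf_of_set {S. S \<subseteq> f ` R \<and> card S = l}"
    using False assms subsets_of_card_nonempty[of R l]
    by (simp add: map_pmf_of_set_inj image_subsets_of_card finite_Collect_subsets)
  moreover have "map_pmf (map_option (image f)) (map_pmf Some p) = map_pmf Some (map_pmf (image f) p)"
    for p :: "'a set pmf" by (simp add: map_pmf_comp)
  ultimately show ?thesis using False assms by (simp add: sample_pmf_def card_image)
qed

(* The value-independent randomness of a round: the messages each node samples, None if the node
   is blocked or receives fewer than l messages. *)
definition samples_pmf :: "nat \<Rightarrow> nat \<Rightarrow> 'm set \<Rightarrow> nat set \<Rightarrow> (nat \<Rightarrow> 'm set option) pmf" where
  "samples_pmf l n M B =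
     Pi_pmf M 0 (\<lambda>_. pmf_of_set {..<n}) \<bind> (\<lambda>dest.
       Pi_pmf {..<n} None (\<lambda>v. if v \<in> B then return_pmf None
                                else sample_pmf l {m \<in> M. dest m = v}))"

lemma round_pmf_eq_map_samples_pmf:
  "round_pmf k l n D B x =
     map_pmf (\<lambda>c. map_option (majority_of l x) \<circ> c) (samples_pmf l n (messages k D) B)"
proof -
  have node: "(let R = {m \<in> messages k D. dest m = v} in
          if v \<in> B \<or> card R < l then return_pmf None
          else map_pmf (\<lambda>S. Some (majority_of l x S)) (pmf_of_set {S. S \<subseteq> R \<and> card S = l}))
      = map_pmf (map_option (majority_of l x))
          (if v \<in> B then return_pmf None else sample_pmf l {m \<in> messages k D. dest m = v})"
    for dest v by (simp add: sample_pmf_def map_pmf_comp Let_def)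
  show ?thesis
    unfolding round_pmf_def samples_pmf_def map_bind_pmf node by (simp add: Pi_pmf_map)
qed

lemma set_samples_pmf:
  assumes "finite M" "c \<in> set_pmf (samples_pmf l n M B)" "c v = Some S"
  shows "S \<subseteq> M"
proof -
  obtain dest where "c \<in> set_pmf (Pi_pmf {..<n} None (\<lambda>v. if v \<in> B then return_pmf None
                                else sample_pmf l {m \<in> M. dest m = v}))"
    using assms(2) by (auto simp: samples_pmf_def)
  then have "c v \<in> insert None (Some ` Pow {m \<in> M. dest m = v})"
    using set_sample_pmf[of "{m \<in> M. dest m = v}" l] assms(1)
    by (auto simp: set_Pi_pmf PiE_dflt_def split: if_splits)
  then show ?thesis using assms(3) by auto
qed

lemma samples_pmf_relabel:
  assumes "finite M" "bij_betw f M M" "\<And>m. m \<notin> M \<Longrightarrow> f m \<notin> M"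
  shows "map_pmf (\<lambda>c. map_option (image f) \<circ> c) (samples_pmf l n M B) = samples_pmf l n M B"
proof -
  let ?Q = "\<lambda>dest. Pi_pmf {..<n} None (\<lambda>v. if v \<in> B then return_pmf None
                                else sample_pmf l {m \<in> M. dest m = v})"
  have received: "f ` {m \<in> M. dest (f m) = v} = {m \<in> M. dest m = v}" for dest v
    using assms(2) by (auto simp: bij_betw_def)
  have "map_pmf (\<lambda>c. map_option (image f) \<circ> c) (?Q (dest \<circ> f)) = ?Q dest" for dest
  proof -
    have "map_pmf (map_option (image f)) (sample_pmf l {m \<in> M. dest (f m) = v})
        = sample_pmf l {m \<in> M. dest m = v}" for v
    proof -
      have "inj_on f {m \<in> M. dest (f m) = v}"
        using assms(2) by (auto simp: bij_betw_def intro: inj_on_subset)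
      then show ?thesis using assms(1) by (simp add: map_sample_pmf_image received)
    qed
    then have "Pi_pmf {..<n} None (\<lambda>v. map_pmf (map_option (image f))
        (if v \<in> B then return_pmf None else sample_pmf l {m \<in> M. (dest \<circ> f) m = v})) = ?Q dest"
      by (intro Pi_pmf_cong) auto
    moreover have "Pi_pmf {..<n} None (\<lambda>v. map_pmf (map_option (image f))
        (if v \<in> B then return_pmf None else sample_pmf l {m \<in> M. (dest \<circ> f) m = v}))
        = map_pmf (\<lambda>c. map_option (image f) \<circ> c) (?Q (dest \<circ> f))"
      by (rule Pi_pmf_map) simp_all
    ultimately show ?thesis by simp
  qed
  then have "samples_pmf l n M B = map_pmf (\<lambda>c. map_option (image f) \<circ> c)
      (Pi_pmf M 0 (\<lambda>_. pmf_of_set {..<n}) \<bind> (\<lambda>dest. ?Q (dest \<circ> f)))"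
    unfolding samples_pmf_def map_bind_pmf by simp
  also have "Pi_pmf M 0 (\<lambda>_. pmf_of_set {..<n}) \<bind> (\<lambda>dest. ?Q (dest \<circ> f))
      = map_pmf (\<lambda>dest. dest \<circ> f) (Pi_pmf M 0 (\<lambda>_. pmf_of_set {..<n})) \<bind> ?Q"
    by (simp add: bind_map_pmf)
  also have "\<dots> = samples_pmf l n M B"
    unfolding samples_pmf_def using assms by (simp add: Pi_pmf_bij_betw[symmetric])
  finally show ?thesis by (rule sym)
qed

lemma majority_of_relabel:
  assumes "inj \<sigma>"
  shows "majority_of l (x \<circ> \<sigma>) S = majority_of l x (map_prod \<sigma> id ` S)"
proof -
  have "{m \<in> map_prod \<sigma> id ` S. x (fst m)} = map_prod \<sigma> id ` {m \<in> S. x (\<sigma> (fst m))}"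
    by force
  moreover have "inj_on (map_prod \<sigma> id) A" for A :: "(nat \<times> nat) set"
    using assms by (auto simp: inj_on_def)
  ultimately show ?thesis
    unfolding majority_of_def by (simp add: card_image)
qed

lemma round_pmf_relabel:
  assumes "finite D" "\<sigma> permutes D"
  shows "round_pmf k l n D B (x \<circ> \<sigma>) = round_pmf k l n D B x"
proof -
  let ?f = "map_prod \<sigma> (id :: nat \<Rightarrow> nat)"
  let ?P = "samples_pmf l n (messages k D) B"
  have "bij_betw ?f (messages k D) (messages k D)"
    unfolding messages_def using assms(2) by (intro bij_betw_map_prod permutes_imp_bij) auto
  moreover have "m \<notin> messages k D \<Longrightarrow> ?f m \<notin> messages k D" for m
    using assms(2) by (cases m) (simp add: messages_def permutes_in_image)
  ultimately have invariant: "map_pmf (\<lambda>c. map_option (image ?f) \<circ> c) ?P = ?P"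
    using assms(1) by (intro samples_pmf_relabel) (simp_all add: messages_def)
  have "majority_of l (x \<circ> \<sigma>) = majority_of l x \<circ> image ?f"
    using permutes_inj[OF assms(2)] by (simp add: fun_eq_iff majority_of_relabel)
  then have "round_pmf k l n D B (x \<circ> \<sigma>)
      = map_pmf (\<lambda>c. map_option (majority_of l x) \<circ> c) (map_pmf (\<lambda>c. map_option (image ?f) \<circ> c) ?P)"
    by (simp add: round_pmf_eq_map_samples_pmf map_pmf_comp) (simp add: comp_def option.map_comp)
  also have "\<dots> = round_pmf k l n D B x"
    by (simp only: invariant round_pmf_eq_map_samples_pmf)
  finally show ?thesis .
qed

lemma majority_of_mono:
  assumes "finite S" "\<And>m. m \<in> S \<Longrightarrow> y (fst m) \<Longrightarrow> x (fst m)" "majority_of l y S"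
  shows "majority_of l x S"
proof -
  have "card {m \<in> S. y (fst m)} \<le> card {m \<in> S. x (fst m)}"
    using assms(1,2) by (intro card_mono) auto
  then show ?thesis using assms(3) unfolding majority_of_def by linarith
qed

lemma imbalance_mono:
  assumes "\<And>v. y v = Some True \<Longrightarrow> z v = Some True"
    and "\<And>v. z v = Some False \<Longrightarrow> y v = Some False"
  shows "imbalance n y \<le> imbalance n z"
proof -
  have "card {v \<in> {..<n}. y v = Some True} \<le> card {v \<in> {..<n}. z v = Some True}"
    using assms(1) by (intro card_mono) auto
  moreover have "card {v \<in> {..<n}. z v = Some False} \<le> card {v \<in> {..<n}. y v = Some False}"
    using assms(2) by (intro card_mono) auto
  ultimately show ?thesis unfolding imbalance_def by (simp add: divide_right_mono)
qed

lemma stoch_dom_map_pmf: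
  assumes "\<And>\<omega>. \<omega> \<in> set_pmf p \<Longrightarrow> g \<omega> \<le> f \<omega>"
  shows "stoch_dom (map_pmf f p) (map_pmf g p)"
  unfolding stoch_dom_def
proof
  fix c :: real
  have "AE \<omega> in p. \<omega> \<in> {\<omega>. c \<le> g \<omega>} \<longrightarrow> \<omega> \<in> {\<omega>. c \<le> f \<omega>}"
    using assms order_trans by (simp add: AE_measure_pmf_iff) blast
  then have "measure_pmf.prob p {\<omega>. c \<le> g \<omega>} \<le> measure_pmf.prob p {\<omega>. c \<le> f \<omega>}"
    by (intro measure_pmf.finite_measure_mono_AE) auto
  then show "measure_pmf.prob (map_pmf g p) {z. c \<le> z} \<le> measure_pmf.prob (map_pmf f p) {z. c \<le> z}"
    by (simp add: vimage_def)
qed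

lemma round_pmf_imbalance_mono:
  assumes "finite D" "\<And>u. u \<in> D \<Longrightarrow> y u \<Longrightarrow> x u"
  shows "stoch_dom (map_pmf (imbalance n) (round_pmf k l n D B x))
                   (map_pmf (imbalance n) (round_pmf k l n D B y))"
proof -
  have majority: "majority_of l y S \<Longrightarrow> majority_of l x S" if "S \<subseteq> messages k D" for S
  proof (erule majority_of_mono[rotated 2])
    show "finite S"
      by (rule finite_subset[OF that]) (simp add: messages_def assms(1))
    show "y (fst m) \<Longrightarrow> x (fst m)" if "m \<in> S" for m
      using \<open>S \<subseteq> messages k D\<close> \<open>m \<in> S\<close> assms(2) by (auto simp: messages_def)
  qed
  have "imbalance n (map_option (majority_of l y) \<circ> c) \<le> imbalance n (map_option (majority_of l x) \<circ> c)"
    if "c \<in> set_pmf (samples_pmf l n (messages k D) B)" for c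
  proof (rule imbalance_mono)
    have sample: "majority_of l y S \<Longrightarrow> majority_of l x S" if "c v = Some S" for v S
      using majority set_samples_pmf[OF _ \<open>c \<in> set_pmf _\<close> that] assms(1) by (simp add: messages_def)
    show "(map_option (majority_of l y) \<circ> c) v = Some True \<Longrightarrow>
          (map_option (majority_of l x) \<circ> c) v = Some True" for v
      using sample by auto
    show "(map_option (majority_of l x) \<circ> c) v = Some False \<Longrightarrow>
          (map_option (majority_of l y) \<circ> c) v = Some False" for v
      using sample by auto
  qed
  then show ?thesis
    unfolding round_pmf_eq_map_samples_pmf map_pmf_comp by (intro stoch_dom_map_pmf) (simp add: comp_def)
qed

lemma exists_permutes_image:
  assumes "finite D" "C \<subseteq> D" "A \<subseteq> D" "card C = card A"
  shows "\<exists>\<sigma>. \<sigma> permutes D \<and> \<sigma> ` C = A"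
proof -
  have finite: "finite C" "finite A"
    using assms(1-3) finite_subset by blast+
  obtain f where f: "bij_betw f C A"
    using finite_same_card_bij[OF finite assms(4)] by blast
  have "card (D - C) = card (D - A)"
    using finite assms(2-4) by (simp add: card_Diff_subset)
  then obtain g where g: "bij_betw g (D - C) (D - A)"
    using finite_same_card_bij[of "D - C" "D - A"] assms(1) by auto
  have "bij_betw (\<lambda>u. if u \<in> C then f u else g u) (C \<union> (D - C)) (A \<union> (D - A))"
    using f g by (intro bij_betw_disjoint_Un) auto
  then have "bij_betw (\<lambda>u. if u \<in> C then f u else g u) D D"
    using assms(2,3) by (simp add: Un_absorb1)
  then have "restrict_id (\<lambda>u. if u \<in> C then f u else g u) D permutes D"
    by (rule permutes_restrict_id)
  moreover have "restrict_id (\<lambda>u. if u \<in> C then f u else g u) D ` C = f ` C"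
    using assms(2) by (intro image_cong) (auto simp: restrict_id_def)
  ultimately show ?thesis
    using f by (auto simp: bij_betw_def)
qed

lemma exists_permutes_dominated:
  assumes "finite D" "card {u \<in> D. y u} \<le> card {u \<in> D. x u}"
  shows "\<exists>\<sigma>. \<sigma> permutes D \<and> (\<forall>u \<in> D. y (\<sigma> u) \<longrightarrow> x u)"
proof -
  obtain C where C: "C \<subseteq> {u \<in> D. x u}" "card C = card {u \<in> D. y u}"
    using obtain_subset_with_card_n[OF assms(2)] by metis
  moreover have "C \<subseteq> D" "{u \<in> D. y u} \<subseteq> D"
    using C(1) by blast+
  ultimately obtain \<sigma> where \<sigma>: "\<sigma> permutes D" "\<sigma> ` C = {u \<in> D. y u}"
    using exists_permutes_image[OF assms(1)] by metis
  have "x u" if "u \<in> D" "y (\<sigma> u)" for u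
  proof -
    have "\<sigma> u \<in> \<sigma> ` C"
      using \<sigma> that by (simp add: permutes_in_image)
    then have "u \<in> C"
      using permutes_inj[OF \<sigma>(1)] by (simp add: inj_image_mem_iff)
    then show ?thesis
      using C(1) by blast
  qed
  with \<sigma>(1) show ?thesis
    by blast
qed

lemma imbalance0_eq:
  assumes "finite D"
  shows "imbalance0 D x = real (card {u \<in> D. x u}) - real (card D) / 2"
proof -
  have "{u \<in> D. \<not> x u} = D - {u \<in> D. x u}" by blast
  then have "card {u \<in> D. \<not> x u} = card D - card {u \<in> D. x u}"
    using assms by (simp add: card_Diff_subset)
  moreover have "card {u \<in> D. x u} \<le> card D"
    using assms by (simp add: card_mono)
  ultimately show ?thesis unfolding imbalance0_def by (simp add: of_nat_diff field_simps)
qed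

theorem lemma5:
  fixes n :: nat and D B :: "nat set" and x x' :: "nat \<Rightarrow> bool"
  assumes "0 < n"
    and "D \<subseteq> {..<n}"
    and "B \<subseteq> {..<n}"
    and "imbalance0 D x \<ge> imbalance0 D x'"
    and "imbalance0 D x' \<ge> 0"
  shows "stoch_dom (map_pmf (imbalance n) (round_pmf 6 3 n D B x))
                   (map_pmf (imbalance n) (round_pmf 6 3 n D B x'))"
proof -
  \<comment> \<open>Neither 0 < n, B \<subseteq> {..<n}, imbalance0 D x' \<ge> 0 nor the parameters (6, 3) are needed.\<close>
  have "finite D"
    using assms(2) by (rule finite_subset) simp
  moreover have "card {u \<in> D. x' u} \<le> card {u \<in> D. x u}"
    using assms(4) \<open>finite D\<close> by (simp add: imbalance0_eq)
  ultimately obtain \<sigma> where \<sigma>: "\<sigma> permutes D" "\<forall>u \<in> D. x' (\<sigma> u) \<longrightarrow> x u"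
    using exists_permutes_dominated by blast
  have "round_pmf 6 3 n D B x' = round_pmf 6 3 n D B (x' \<circ> \<sigma>)"
    using round_pmf_relabel[OF \<open>finite D\<close> \<sigma>(1)] by simp
  moreover have "stoch_dom (map_pmf (imbalance n) (round_pmf 6 3 n D B x))
                         (map_pmf (imbalance n) (round_pmf 6 3 n D B (x' \<circ> \<sigma>)))"
    using \<sigma>(2) by (intro round_pmf_imbalance_mono \<open>finite D\<close>) simp
  ultimately show ?thesis by simp
qed

end
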